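(* Let $S$ be a set of $n\ge 3$ points in the plane in general position (no four points of $S$ cocircular, no three collinear). For $1\le i\le n-1$ let $f_i^{\infty}$ be the number of unbounded regions of the $i$-th order Voronoi diagram of $S$, and for $0\le j\le n-3$ let $c_j$ be the number of 3-element subsets of $S$ whose circumscribed circle contains exactly $j$ points of $S$ in its interior; set $c_{-1}:=0$. Then for every $i$ with $1\le i\le n-2$, $$f_i^{\infty} + (c_{i-1}-c_{i-2}) = 2(n-i).$$
   Context: For points $x,y$ in the plane let $h(x,y)=\{p\in\mathbb{R}^2 : d(x,p)\le d(y,p)\}$. For $A\subseteq S$ let $V(A)=\bigcap_{x\in A,\,y\in S\setminus A} h(x,y)$. The $i$-th order Voronoi diagram consists of the nonempty regions $V(A)$ with $|A|=i$; $f_i^\infty$ counts those that are unbounded subsets of the plane. *)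

theory Defs
  imports "HOL-Analysis.Analysis"
begin

type_synonym point = "real ^ 2"

definition halfplane :: "point \<Rightarrow> point \<Rightarrow> point set" where
  "halfplane x y = {p. dist x p \<le> dist y p}"

definition voronoi_region :: "point set \<Rightarrow> point set \<Rightarrow> point set" where
  "voronoi_region S A = (\<Inter>x\<in>A. \<Inter>y\<in>S - A. halfplane x y)"

definition f_inf :: "point set \<Rightarrow> nat \<Rightarrow> nat" where
  "f_inf S i = card {A. A \<subseteq> S \<and> card A = i \<and> voronoi_region S A \<noteq> {}
                       \<and> \<not> bounded (voronoi_region S A)}"

definition cocircular :: "point set \<Rightarrow> bool" where
  "cocircular P \<longleftrightarrow> (\<exists>c r. \<forall>p\<in>P. dist p c = r)"

definition general_position :: "point set \<Rightarrow> bool" where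
  "general_position S \<longleftrightarrow>
     (\<forall>T\<subseteq>S. card T = 3 \<longrightarrow> \<not> collinear T) \<and>
     (\<forall>T\<subseteq>S. card T = 4 \<longrightarrow> \<not> cocircular T)"

definition in_circumdisk :: "point set \<Rightarrow> point \<Rightarrow> bool" where
  "in_circumdisk T p \<longleftrightarrow> (\<exists>c r. (\<forall>q\<in>T. dist q c = r) \<and> dist p c < r)"

definition circ_count :: "point set \<Rightarrow> int \<Rightarrow> nat" where
  "circ_count S j = (if j < 0 then 0 else
     card {T. T \<subseteq> S \<and> card T = 3 \<and> int (card {p\<in>S. in_circumdisk T p}) = j})"

end

theory Submission
  imports Defs "HOL-Analysis.Analysis"
begin

text \<open>Both sides are compared with \<open>N\<^sub>k\<close>, the number of ordered pairs \<open>(p, q)\<close> of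
  points of \<open>S\<close> with exactly \<open>k\<close> points of \<open>S\<close> strictly left of the line \<open>pq\<close>.

  A region \<open>V(A)\<close> of the \<open>i\<close>-th order diagram is unbounded iff a line strictly separates
  \<open>A\<close> from \<open>S - A\<close>. Rotating such a line until it is blocked by a point on each side shows
  that, in general position, these sets are exactly the sets \<open>{p} \<union> left(p, q)\<close> with
  \<open>|left(p, q)| = i - 1\<close>, and \<open>A\<close> determines \<open>(p, q)\<close>; hence \<open>f\<^sub>i\<^sup>\<infinity> = N\<^sub>i\<^sub>-\<^sub>1\<close>.

  For the circles, fix a generic direction and, for every ordered pair \<open>(p, q)\<close>, sweep the
  pencil of circles through \<open>p\<close> and \<open>q\<close> from the circle tangent at \<open>p\<close> to the sweep
  line until it degenerates into the half-plane left of \<open>pq\<close>. The indicator that exactly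
  \<open>k\<close> points lie inside changes only when the circle passes a third point \<open>e\<close>, by a jump
  that depends on the number of points inside the circumcircle of \<open>pqe\<close>. Summed over all
  pairs, the tangent circles contribute \<open>2(n - 1 - k)\<close>, since for fixed \<open>p\<close> they are
  nested on either side of \<open>p\<close>; and the six orderings of a triangle contribute its jump
  exactly once, because exactly one vertex lies strictly between the other two in the sweep
  direction. So \<open>N\<^sub>k - (c\<^sub>k\<^sub>-\<^sub>1 - c\<^sub>k) = 2(n - 1 - k)\<close>.\<close>

lemma card_filter_remove:
  assumes "finite E" "x \<in> E"
  shows "card {e\<in>E. P e} = card {e\<in>E - {x}. P e} + of_bool (P x)"
proof (cases "P x")
  case True
  then have "{e\<in>E. P e} = insert x {e\<in>E - {x}. P e}" using assms(2) by auto
  then show ?thesis using True assms(1) by simp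
next
  case False
  then have "{e\<in>E. P e} = {e\<in>E - {x}. P e}" by auto
  then show ?thesis using False by simp
qed

lemma exists_gap_above:
  fixes x :: real
  assumes "finite V"
  obtains t where "x < t" "\<forall>v\<in>V. v \<le> x \<or> t < v"
proof -
  define U where "U = {v\<in>V. x < v}"
  have "finite U" using assms by (simp add: U_def)
  define t where "t = (if U = {} then x + 1 else (x + Min U) / 2)"
  have "x < t" "\<forall>v\<in>U. t < v"
    using Min_in[OF \<open>finite U\<close>] Min_le[OF \<open>finite U\<close>] by (fastforce simp: t_def U_def)+
  then show thesis by (intro that) (auto simp: U_def)
qed

definition indicator_jump :: "int \<Rightarrow> nat \<Rightarrow> int" where
  "indicator_jump k c = of_bool (int c + 1 = k) - of_bool (int c = k)"

lemma sweep_indicator_step: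
  fixes \<tau> :: "'a \<Rightarrow> real" and sg :: "'a \<Rightarrow> bool" and k :: int
  defines "active t e \<equiv> if sg e then \<tau> e < t else t < \<tau> e"
  assumes "finite E" "e\<^sub>1 \<in> E" "t < \<tau> e\<^sub>1" "\<tau> e\<^sub>1 < t'"
    and "\<And>e. e \<in> E - {e\<^sub>1} \<Longrightarrow> \<tau> e < t \<or> t' < \<tau> e"
  shows "of_bool (int (card {e\<in>E. active t e}) = k) = of_bool (int (card {e\<in>E. active t' e}) = k)
    - (if sg e\<^sub>1 then 1 else -1) * indicator_jump k (card {e\<in>E - {e\<^sub>1}. active (\<tau> e\<^sub>1) e})"
proof -
  define c where "c = card {e\<in>E - {e\<^sub>1}. active (\<tau> e\<^sub>1) e}"
  have "active t e = active (\<tau> e\<^sub>1) e" "active t' e = active (\<tau> e\<^sub>1) e" if "e \<in> E - {e\<^sub>1}" for e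
    using assms(6)[OF that] assms(4,5) unfolding active_def by auto
  then have "{e\<in>E - {e\<^sub>1}. active t e} = {e\<in>E - {e\<^sub>1}. active (\<tau> e\<^sub>1) e}"
    "{e\<in>E - {e\<^sub>1}. active t' e} = {e\<in>E - {e\<^sub>1}. active (\<tau> e\<^sub>1) e}"
    by auto
  moreover have "active t e\<^sub>1 \<longleftrightarrow> \<not> sg e\<^sub>1" "active t' e\<^sub>1 \<longleftrightarrow> sg e\<^sub>1"
    using assms(4,5) by (auto simp: active_def)
  ultimately have "card {e\<in>E. active t e} = c + of_bool (\<not> sg e\<^sub>1)"
    "card {e\<in>E. active t' e} = c + of_bool (sg e\<^sub>1)"
    using card_filter_remove[OF assms(2,3), of "active t"] card_filter_remove[OF assms(2,3), of "active t'"]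
    unfolding c_def by simp_all
  then show ?thesis unfolding c_def[symmetric] indicator_jump_def by (cases "sg e\<^sub>1") auto
qed

lemma sweep_count_indicator:
  fixes \<tau> :: "'a \<Rightarrow> real" and sg :: "'a \<Rightarrow> bool" and k :: int
  defines "active t e \<equiv> if sg e then \<tau> e < t else t < \<tau> e"
  assumes "finite E" "inj_on \<tau> E" "t \<notin> \<tau> ` E"
  shows "of_bool (int (card {e\<in>E. active t e}) = k) = of_bool (int (card {e\<in>E. sg e}) = k)
    - (\<Sum>e | e \<in> E \<and> t < \<tau> e.
         (if sg e then 1 else -1) * indicator_jump k (card {e'\<in>E - {e}. active (\<tau> e) e'}))"
  using assms(4)
proof (induction "card {e\<in>E. t < \<tau> e}" arbitrary: t)
  case 0
  then have "\<forall>e\<in>E. \<tau> e < t" using assms(2) by (fastforce simp: not_less)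
  then have "{e\<in>E. active t e} = {e\<in>E. sg e}" "{e\<in>E. t < \<tau> e} = {}"
    unfolding active_def by auto
  then show ?case by (simp del: Collect_empty_eq)
next
  case (Suc n)
  define U where "U = {e\<in>E. t < \<tau> e}"
  define J where "J e = (if sg e then 1 else -1) * indicator_jump k (card {e'\<in>E - {e}. active (\<tau> e) e'})"
    for e
  have "finite U" using assms(2) by (simp add: U_def)
  have "U \<noteq> {}" using Suc.hyps(2) unfolding U_def by (metis card.empty Zero_not_Suc)
  define e\<^sub>1 where "e\<^sub>1 = arg_min_on \<tau> U"
  have "e\<^sub>1 \<in> U" "\<forall>e\<in>U. \<tau> e\<^sub>1 \<le> \<tau> e"
    using arg_min_if_finite[OF \<open>finite U\<close> \<open>U \<noteq> {}\<close>, of \<tau>] by (auto simp: e\<^sub>1_def not_less[symmetric])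
  then have e\<^sub>1: "e\<^sub>1 \<in> E" "t < \<tau> e\<^sub>1" "\<forall>e\<in>U. \<tau> e\<^sub>1 \<le> \<tau> e" by (auto simp: U_def)
  obtain t' where t': "\<tau> e\<^sub>1 < t'" "\<forall>v\<in>\<tau> ` E. v \<le> \<tau> e\<^sub>1 \<or> t' < v"
    using exists_gap_above[of "\<tau> ` E"] assms(2) by blast
  have gap: "\<tau> e < t \<or> t' < \<tau> e" if "e \<in> E - {e\<^sub>1}" for e
  proof (cases "t < \<tau> e")
    case True
    then have "\<tau> e\<^sub>1 < \<tau> e"
      using e\<^sub>1 that inj_onD[OF assms(3), of e e\<^sub>1] by (force simp: U_def)
    then show ?thesis using t'(2) that by force
  next
    case False
    then show ?thesis using Suc.prems that by (force simp: not_less_iff_gr_or_eq)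
  qed
  have "t' < \<tau> e \<longleftrightarrow> e \<in> U - {e\<^sub>1}" if "e \<in> E" for e
    using gap[of e] that e\<^sub>1(2) t'(1) by (cases "e = e\<^sub>1") (auto simp: U_def)
  then have "{e\<in>E. t' < \<tau> e} = U - {e\<^sub>1}" by (auto simp: U_def)
  moreover have "t' \<notin> \<tau> ` E" using gap e\<^sub>1(2) t'(1) by force
  moreover have "n = card (U - {e\<^sub>1})" using Suc.hyps(2) \<open>finite U\<close> \<open>e\<^sub>1 \<in> U\<close> by (simp add: U_def)
  ultimately have "of_bool (int (card {e\<in>E. active t' e}) = k)
      = of_bool (int (card {e\<in>E. sg e}) = k) - (\<Sum>e\<in>U - {e\<^sub>1}. J e)"
    using Suc.hyps(1)[of t'] by (simp add: J_def set_diff_eq)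
  moreover have "(\<Sum>e\<in>U. J e) = J e\<^sub>1 + (\<Sum>e\<in>U - {e\<^sub>1}. J e)"
    by (rule sum.remove[OF \<open>finite U\<close> \<open>e\<^sub>1 \<in> U\<close>])
  ultimately show ?case
    using sweep_indicator_step[where \<tau> = \<tau> and sg = sg and k = k, OF assms(2) e\<^sub>1(1,2) t'(1) gap]
    unfolding active_def J_def U_def by simp
qed

lemma bij_betw_rank:
  fixes f :: "'a \<Rightarrow> 'b::linorder"
  assumes "finite F" "inj_on f F"
  shows "bij_betw (\<lambda>x. card {z\<in>F. f z < f x}) F {..<card F}"
proof -
  let ?r = "\<lambda>x. card {z\<in>F. f z < f x}"
  have mono: "?r x < ?r y" if "x \<in> F" "y \<in> F" "f x < f y" for x y
    using that assms(1) by (intro psubset_card_mono) auto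
  have "inj_on ?r F"
  proof (rule inj_onI, rule ccontr)
    fix x y assume "x \<in> F" "y \<in> F" "?r x = ?r y" "x \<noteq> y"
    then have "f x \<noteq> f y" using assms(2) by (auto dest: inj_onD)
    then show False using mono[of x y] mono[of y x] \<open>x \<in> F\<close> \<open>y \<in> F\<close> \<open>?r x = ?r y\<close>
      by (auto simp: neq_iff)
  qed
  moreover have "?r ` F \<subseteq> {..<card F}"
    using assms(1) by (auto intro!: psubset_card_mono)
  ultimately show ?thesis
    by (simp add: bij_betw_def card_image card_subset_eq)
qed

lemma sum_rank:
  fixes f :: "'a \<Rightarrow> 'b::linorder"
  assumes "finite F" "inj_on f F"
  shows "(\<Sum>x\<in>F. g (card {z\<in>F. f z < f x})) = (\<Sum>m<card F. g m)"
  using sum.reindex_bij_betw[OF bij_betw_rank[OF assms], of g] by simp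

lemma sum_indicator_rank_eq:
  fixes f :: "'a \<Rightarrow> 'b::linorder"
  assumes "finite F" "inj_on f F"
  shows "(\<Sum>x\<in>F. of_bool (card {z\<in>F. f z < f x} = k)) = (of_bool (k < card F) :: int)"
proof -
  have "(\<Sum>x\<in>F. of_bool (card {z\<in>F. f z < f x} = k)) = (\<Sum>m<card F. (of_bool (m = k) :: int))"
    by (rule sum_rank[OF assms])
  also have "\<dots> = int (card ({..<card F} \<inter> {m. m = k}))"
    by simp
  also have "{..<card F} \<inter> {m. m = k} = (if k < card F then {k} else {})"
    by auto
  finally show ?thesis by simp
qed

lemma sum_indicator_rank_gt:
  fixes f :: "'a \<Rightarrow> 'b::linorder"
  assumes "finite F" "inj_on f F"
  shows "(\<Sum>x\<in>F. of_bool (k < card {z\<in>F. f z < f x})) = int (card F - Suc k)"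
proof -
  have "(\<Sum>x\<in>F. of_bool (k < card {z\<in>F. f z < f x})) = (\<Sum>m<card F. (of_bool (k < m) :: int))"
    by (rule sum_rank[OF assms])
  also have "\<dots> = int (card ({..<card F} \<inter> {m. k < m}))"
    by simp
  also have "{..<card F} \<inter> {m. k < m} = {Suc k..<card F}"
    by auto
  finally show ?thesis by simp
qed

lemma one_strictly_between:
  fixes x y z :: real
  assumes "x \<noteq> y" "x \<noteq> z" "y \<noteq> z"
  shows "of_bool ((y - x) * (z - x) < 0) + of_bool ((x - y) * (z - y) < 0)
    + of_bool ((x - z) * (y - z) < 0) = (1::int)"
  using assms
  by (cases x y rule: linorder_cases; cases y z rule: linorder_cases; cases x z rule: linorder_cases)
     (auto simp: mult_less_0_iff)

lemma distinct_triples_eq_permutations: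
  assumes "a \<noteq> b" "a \<noteq> c" "b \<noteq> c"
  shows "{(p, q, e). p \<noteq> q \<and> p \<noteq> e \<and> q \<noteq> e \<and> {p, q, e} = {a, b, c}}
    = {(a, b, c), (a, c, b), (b, a, c), (b, c, a), (c, a, b), (c, b, a)}"
proof (rule set_eqI, clarify)
  fix p q e
  show "(p, q, e) \<in> {(p, q, e). p \<noteq> q \<and> p \<noteq> e \<and> q \<noteq> e \<and> {p, q, e} = {a, b, c}}
    \<longleftrightarrow> (p, q, e) \<in> {(a, b, c), (a, c, b), (b, a, c), (b, c, a), (c, a, b), (c, b, a)}"
  proof
    assume "(p, q, e) \<in> {(p, q, e). p \<noteq> q \<and> p \<noteq> e \<and> q \<noteq> e \<and> {p, q, e} = {a, b, c}}"
    then have "p \<noteq> q" "p \<noteq> e" "q \<noteq> e" and span: "{p, q, e} = {a, b, c}" by auto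
    moreover have "p \<in> {a, b, c}" "q \<in> {a, b, c}" "e \<in> {a, b, c}" "a \<in> {p, q, e}" "b \<in> {p, q, e}"
      using span by blast+
    ultimately show "(p, q, e) \<in> {(a, b, c), (a, c, b), (b, a, c), (b, c, a), (c, a, b), (c, b, a)}"
      using assms by auto
  qed (use assms in \<open>auto simp: insert_commute\<close>)
qed

lemma sum_ordered_triples:
  fixes w :: "'a \<Rightarrow> 'a \<Rightarrow> 'a \<Rightarrow> 'b::comm_semiring_1" and g :: "'a set \<Rightarrow> 'b"
  assumes "finite S"
    and "\<And>a b c. a \<in> S \<Longrightarrow> b \<in> S \<Longrightarrow> c \<in> S \<Longrightarrow> a \<noteq> b \<Longrightarrow> a \<noteq> c \<Longrightarrow> b \<noteq> c \<Longrightarrow>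
      w a b c + w a c b + w b a c + w b c a + w c a b + w c b a = 1"
  shows "(\<Sum>p\<in>S. \<Sum>q\<in>S - {p}. \<Sum>e\<in>S - {p, q}. w p q e * g {p, q, e})
    = (\<Sum>T | T \<subseteq> S \<and> card T = 3. g T)"
proof -
  define D where "D = Sigma S (\<lambda>p. Sigma (S - {p}) (\<lambda>q. S - {p, q}))"
  define vertices :: "'a \<times> 'a \<times> 'a \<Rightarrow> 'a set" where "vertices = (\<lambda>(p, q, e). {p, q, e})"
  define h where "h = (\<lambda>(p, q, e). w p q e * g {p, q, e})"
  have "finite D" using assms(1) by (simp add: D_def)
  have "finite {T. T \<subseteq> S \<and> card T = 3}" using assms(1) by simp
  have "vertices ` D \<subseteq> {T. T \<subseteq> S \<and> card T = 3}"
    by (auto simp: D_def vertices_def)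
  have fibre: "(\<Sum>x\<in>{x\<in>D. vertices x = T}. h x) = g T" if "T \<subseteq> S" "card T = 3" for T
  proof -
    obtain a b c where T: "T = {a, b, c}" "a \<noteq> b" "a \<noteq> c" "b \<noteq> c"
      using \<open>card T = 3\<close> by (auto simp: card_3_iff)
    have "{x\<in>D. vertices x = T} = {(p, q, e). p \<noteq> q \<and> p \<noteq> e \<and> q \<noteq> e \<and> {p, q, e} = T}"
      using that(1) by (auto simp: D_def vertices_def)
    also have "\<dots> = {(a, b, c), (a, c, b), (b, a, c), (b, c, a), (c, a, b), (c, b, a)}"
      unfolding T(1) by (rule distinct_triples_eq_permutations[OF T(2-4)])
    finally have "{x\<in>D. vertices x = T} = {(a, b, c), (a, c, b), (b, a, c), (b, c, a), (c, a, b), (c, b, a)}" .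
    moreover have "{a, c, b} = T" "{b, a, c} = T" "{b, c, a} = T" "{c, a, b} = T" "{c, b, a} = T"
      using T by auto
    ultimately have "(\<Sum>x\<in>{x\<in>D. vertices x = T}. h x)
        = (w a b c + w a c b + w b a c + w b c a + w c a b + w c b a) * g T"
      using T by (simp add: h_def algebra_simps)
    then show ?thesis using assms(2) that T by auto
  qed
  have "(\<Sum>p\<in>S. \<Sum>q\<in>S - {p}. \<Sum>e\<in>S - {p, q}. w p q e * g {p, q, e}) = (\<Sum>x\<in>D. h x)"
    using assms(1) by (simp add: D_def h_def sum.Sigma)
  also have "\<dots> = (\<Sum>T | T \<subseteq> S \<and> card T = 3. \<Sum>x\<in>{x\<in>D. vertices x = T}. h x)"
    by (rule sum.group[symmetric]) fact+
  also have "\<dots> = (\<Sum>T | T \<subseteq> S \<and> card T = 3. g T)"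
    using fibre by (intro sum.cong) auto
  finally show ?thesis .
qed

lemma finite_roots_affine:
  fixes \<alpha> \<beta> :: real
  assumes "\<alpha> \<noteq> 0 \<or> \<beta> \<noteq> 0"
  shows "finite {s. \<alpha> + s * \<beta> = 0}"
proof (cases "\<beta> = 0")
  case False
  then have "{s. \<alpha> + s * \<beta> = 0} = {- \<alpha> / \<beta>}" by (auto simp: field_simps)
  then show ?thesis by simp
qed (use assms in simp)

lemma exists_perturbation_pos:
  fixes f g :: "'a \<Rightarrow> real"
  assumes "finite P" "\<And>x. x \<in> P \<Longrightarrow> 0 < f x \<or> (f x = 0 \<and> 0 < g x)"
  shows "\<exists>\<epsilon>. \<forall>x\<in>P. 0 < f x + \<epsilon> * g x"
proof -
  have "eventually (\<lambda>\<epsilon>. 0 < f x + \<epsilon> * g x) (at_right 0)" if "x \<in> P" for x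
  proof (cases "0 < f x")
    case True
    have "((\<lambda>\<epsilon>. f x + \<epsilon> * g x) \<longlongrightarrow> f x + 0 * g x) (at_right 0)"
      by (intro tendsto_intros)
    then show ?thesis using True by (simp add: order_tendstoD(1))
  next
    case False
    then have "f x = 0" "0 < g x" using assms(2) that by auto
    then show ?thesis
      by (auto intro: eventually_mono[OF eventually_at_right_less])
  qed
  then have "eventually (\<lambda>\<epsilon>. \<forall>x\<in>P. 0 < f x + \<epsilon> * g x) (at_right 0)"
    by (intro eventually_ball_finite assms(1)) auto
  then show ?thesis
    using eventually_happens'[OF trivial_limit_at_right_real] by blast
qed

lemma bounded_halfspace_intersection:
  fixes P :: "('a::euclidean_space \<times> real) set"
  assumes "finite P" "\<And>u. u \<noteq> 0 \<Longrightarrow> \<exists>(v, k)\<in>P. 0 < inner u v"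
  shows "bounded {x. \<forall>(v, k)\<in>P. inner x v \<le> k}"
proof -
  define h where "h u = (\<Sum>(v, k)\<in>P. max 0 (inner u v))" for u
  have "continuous_on (sphere 0 1) h"
    unfolding h_def case_prod_beta by (intro continuous_intros)
  moreover have "sphere (0::'a) 1 \<noteq> {}" by simp
  ultimately obtain u0 where u0: "u0 \<in> sphere 0 1" "\<forall>u\<in>sphere 0 1. h u0 \<le> h u"
    using continuous_attains_inf[OF compact_sphere] by blast
  then have "u0 \<noteq> 0" by auto
  then obtain vk where "vk \<in> P" "0 < inner u0 (fst vk)"
    using assms(2)[of u0] by (auto simp: case_prod_beta)
  then have "0 < h u0"
    unfolding h_def case_prod_beta by (intro sum_pos2[OF assms(1), of vk]) auto
  define M where "M = (\<Sum>(v, k)\<in>P. max 0 k)"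
  have "norm x * h u0 \<le> M" if x: "\<forall>(v, k)\<in>P. inner x v \<le> k" for x
  proof (cases "x = 0")
    case True
    then show ?thesis by (auto simp: M_def intro: sum_nonneg)
  next
    case False
    then have "norm x * h u0 \<le> norm x * h (x /\<^sub>R norm x)" using u0(2) by (simp add: mult_left_mono)
    also have "\<dots> = (\<Sum>(v, k)\<in>P. max 0 (inner x v))"
    proof -
      have "norm x * max 0 (inner (x /\<^sub>R norm x) v) = max 0 (inner x v)" for v
        using False by (simp add: max_def field_simps)
      then show ?thesis by (simp add: h_def sum_distrib_left case_prod_beta)
    qed
    also have "\<dots> \<le> M"
      unfolding M_def using x by (intro sum_mono) auto
    finally show ?thesis .
  qed
  then show ?thesis
    unfolding bounded_iff using \<open>0 < h u0\<close> by (auto simp: pos_le_divide_eq intro!: exI[of _ "M / h u0"])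
qed

section \<open>Orientation and general position\<close>

lemma inner_point: "inner (x::point) y = x$1 * y$1 + x$2 * y$2"
  by (simp add: inner_vec_def sum_2)

lemma point_eqI: "(x::point)$1 = y$1 \<Longrightarrow> x$2 = y$2 \<Longrightarrow> x = y"
  by (simp add: vec_eq_iff forall_2)

lemma point_neq_0_iff: "(u::point) \<noteq> 0 \<longleftrightarrow> u$1 \<noteq> 0 \<or> u$2 \<noteq> 0"
  by (auto intro: point_eqI)

definition sqdist :: "point \<Rightarrow> point \<Rightarrow> real" where
  "sqdist x y = (x$1 - y$1)^2 + (x$2 - y$2)^2"

lemma dist_eq_sqrt_sqdist: "dist x y = sqrt (sqdist x y)"
proof -
  have "(dist x y)^2 = sqdist x y"
    unfolding dist_norm power2_norm_eq_inner inner_point sqdist_def by (simp add: power2_eq_square)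
  then show ?thesis by (metis real_sqrt_abs abs_of_nonneg zero_le_dist)
qed

lemma sqdist_nonneg: "0 \<le> sqdist x y"
  by (simp add: sqdist_def)

lemma sqdist_pos: "x \<noteq> y \<Longrightarrow> 0 < sqdist x y"
  by (metis dist_eq_sqrt_sqdist dist_pos_lt real_sqrt_gt_0_iff)

lemma dist_le_iff_sqdist_le: "dist x y \<le> dist z w \<longleftrightarrow> sqdist x y \<le> sqdist z w"
  by (simp add: dist_eq_sqrt_sqdist sqdist_nonneg)

lemma dist_less_iff_sqdist_less: "dist x y < dist z w \<longleftrightarrow> sqdist x y < sqdist z w"
  by (simp add: dist_eq_sqrt_sqdist sqdist_nonneg)

lemma dist_eq_iff_sqdist_eq: "dist x y = dist z w \<longleftrightarrow> sqdist x y = sqdist z w"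
  by (simp add: dist_eq_sqrt_sqdist sqdist_nonneg)

lemma sqdist_diff: "sqdist a c - sqdist b c = inner a a - inner b b - 2 * inner c (a - b)"
  unfolding sqdist_def inner_point by (simp add: power2_eq_square algebra_simps)

text \<open>Twice the signed area of the triangle \<open>abc\<close>: positive iff \<open>c\<close> lies to the left of
  the directed line from \<open>a\<close> to \<open>b\<close>.\<close>
definition orient :: "point \<Rightarrow> point \<Rightarrow> point \<Rightarrow> real" where
  "orient a b c = (b$1 - a$1) * (c$2 - a$2) - (b$2 - a$2) * (c$1 - a$1)"

lemma orient_degenerate [simp]: "orient a a c = 0" "orient a b a = 0" "orient a b b = 0"
  by (simp_all add: orient_def)

lemma orient_swap12: "orient b a c = - orient a b c"
  by (simp add: orient_def algebra_simps)

lemma orient_swap23: "orient a c b = - orient a b c"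
  by (simp add: orient_def algebra_simps)

lemma collinear_if_orient_eq_0:
  assumes "orient a b c = 0"
  shows "collinear {a, b, c}"
proof (cases "a = b")
  case False
  define k where "k = (if b$1 \<noteq> a$1 then (c$1 - a$1) / (b$1 - a$1) else (c$2 - a$2) / (b$2 - a$2))"
  have "b$1 \<noteq> a$1 \<or> b$2 \<noteq> a$2"
    using False point_eqI by metis
  then have "c - a = k *\<^sub>R (b - a)"
    using assms by (intro point_eqI) (auto simp: k_def orient_def field_simps)
  then have "collinear {0, b - a, c - a}"
    by (auto simp: collinear_lemma)
  then have "collinear {b, a, c}"
    by (subst collinear_3) auto
  then show ?thesis
    by (simp add: insert_commute)
qed simp

lemma general_position_orient_neq_0:
  assumes "general_position S" "a \<in> S" "b \<in> S" "c \<in> S" "a \<noteq> b" "a \<noteq> c" "b \<noteq> c"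
  shows "orient a b c \<noteq> 0"
proof
  assume "orient a b c = 0"
  then have "collinear {a, b, c}" by (rule collinear_if_orient_eq_0)
  moreover have "card {a, b, c} = 3" using assms by auto
  ultimately show False using assms(1-4) unfolding general_position_def by auto
qed

lemma general_position_not_equidistant:
  assumes "general_position S" "a \<in> S" "b \<in> S" "c \<in> S" "d \<in> S"
    "a \<noteq> b" "a \<noteq> c" "a \<noteq> d" "b \<noteq> c" "b \<noteq> d" "c \<noteq> d"
    "sqdist b z = sqdist a z" "sqdist c z = sqdist a z" "sqdist d z = sqdist a z"
  shows False
proof -
  have "cocircular {a, b, c, d}" unfolding cocircular_def
    using assms(12-14) by (intro exI[of _ z] exI[of _ "dist a z"]) (auto simp: dist_eq_iff_sqdist_eq)
  moreover have "card {a, b, c, d} = 4" using assms by auto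
  ultimately show False using assms(1-5) unfolding general_position_def by auto
qed

lemma orient_eq_0_if_inner_eq:
  assumes "(u::point) \<noteq> 0" "inner u x = inner u y" "inner u x = inner u z"
  shows "orient x y z = 0"
proof -
  have "u$1 * orient x y z = 0" "u$2 * orient x y z = 0"
    using assms(2,3) unfolding inner_point orient_def by algebra+
  then show ?thesis using assms(1) point_neq_0_iff by auto
qed

section \<open>Circles through two and three points\<close>

text \<open>The circles through \<open>p\<close> and \<open>q\<close> form a pencil. The member with parameter \<open>t\<close> is centred
  at the midpoint of \<open>pq\<close> moved by \<open>t\<close> times \<open>q - p\<close> turned left by a right angle, so as
  \<open>t\<close> increases its disk gains the points left of \<open>pq\<close> and loses those right of it.\<close>
definition pencil_centre :: "point \<Rightarrow> point \<Rightarrow> real \<Rightarrow> point" where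
  "pencil_centre p q t =
     vector [(p$1 + q$1) / 2 - t * (q$2 - p$2), (p$2 + q$2) / 2 + t * (q$1 - p$1)]"

definition in_pencil_disk :: "point \<Rightarrow> point \<Rightarrow> real \<Rightarrow> point \<Rightarrow> bool" where
  "in_pencil_disk p q t z \<longleftrightarrow> sqdist z (pencil_centre p q t) < sqdist p (pencil_centre p q t)"

definition pencil_param :: "point \<Rightarrow> point \<Rightarrow> point \<Rightarrow> real" where
  "pencil_param p q z = inner (z - p) (z - q) / (2 * orient p q z)"

lemma sqdist_pencil_centre:
  "sqdist z (pencil_centre p q t) - sqdist p (pencil_centre p q t)
     = inner (z - p) (z - q) - 2 * t * orient p q z"
  unfolding sqdist_def pencil_centre_def inner_point orient_def
  by (simp add: power2_eq_square algebra_simps)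

lemma in_pencil_disk_iff_inner: "in_pencil_disk p q t z \<longleftrightarrow> inner (z - p) (z - q) < 2 * t * orient p q z"
  using sqdist_pencil_centre[of z p q t] unfolding in_pencil_disk_def by linarith

lemma not_in_pencil_disk_ends: "\<not> in_pencil_disk p q t p" "\<not> in_pencil_disk p q t q"
  by (simp_all add: in_pencil_disk_iff_inner)

lemma in_pencil_disk_iff_param:
  assumes "orient p q z \<noteq> 0"
  shows "in_pencil_disk p q t z \<longleftrightarrow>
    (if 0 < orient p q z then pencil_param p q z < t else t < pencil_param p q z)"
proof (cases "0 < orient p q z")
  case False
  then have "orient p q z < 0" using assms by linarith
  then show ?thesis
    unfolding in_pencil_disk_iff_inner pencil_param_def by (simp add: field_simps)
qed (simp add: in_pencil_disk_iff_inner pencil_param_def field_simps)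

definition circumcentre :: "point \<Rightarrow> point \<Rightarrow> point \<Rightarrow> point" where
  "circumcentre a b c = pencil_centre a b (pencil_param a b c)"

lemma circumcentre_equidistant:
  assumes "orient a b c \<noteq> 0"
  shows "sqdist b (circumcentre a b c) = sqdist a (circumcentre a b c)"
    "sqdist c (circumcentre a b c) = sqdist a (circumcentre a b c)"
proof -
  show "sqdist b (circumcentre a b c) = sqdist a (circumcentre a b c)"
    using sqdist_pencil_centre[of b a b] by (simp add: circumcentre_def)
  have "2 * pencil_param a b c * orient a b c = inner (c - a) (c - b)"
    using assms by (simp add: pencil_param_def)
  then show "sqdist c (circumcentre a b c) = sqdist a (circumcentre a b c)"
    using sqdist_pencil_centre[of c a b "pencil_param a b c"] unfolding circumcentre_def by linarith
qed

lemma circumcentre_unique: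
  assumes "orient a b c \<noteq> 0" "sqdist b z = sqdist a z" "sqdist c z = sqdist a z"
  shows "z = circumcentre a b c"
proof (rule ccontr)
  define ctr where "ctr = circumcentre a b c"
  assume "z \<noteq> ctr"
  have "inner (z - ctr) x = inner (z - ctr) a" if "sqdist x z = sqdist a z" "sqdist x ctr = sqdist a ctr" for x
    using that sqdist_diff[of x z a] sqdist_diff[of x ctr a]
    by (simp add: inner_diff_left inner_diff_right inner_commute)
  then have "inner (z - ctr) a = inner (z - ctr) b" "inner (z - ctr) a = inner (z - ctr) c"
    using assms(2,3) circumcentre_equidistant[OF assms(1)] unfolding ctr_def by metis+
  then have "orient a b c = 0"
    using \<open>z \<noteq> ctr\<close> by (intro orient_eq_0_if_inner_eq[of "z - ctr"]) auto
  then show False using assms(1) by simp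
qed

lemma circumcentre_swap12:
  assumes "orient a b c \<noteq> 0"
  shows "circumcentre b a c = circumcentre a b c"
proof -
  have "orient b a c \<noteq> 0" using assms orient_swap12[of b a c] by simp
  then show ?thesis
    using circumcentre_equidistant[OF assms] by (intro circumcentre_unique[symmetric]) auto
qed

lemma circumcentre_swap23:
  assumes "orient a b c \<noteq> 0"
  shows "circumcentre a c b = circumcentre a b c"
proof -
  have "orient a c b \<noteq> 0" using assms orient_swap23[of a c b] by simp
  then show ?thesis
    using circumcentre_equidistant[OF assms] by (intro circumcentre_unique[symmetric]) auto
qed

lemma in_circumdisk_iff:
  assumes "orient a b c \<noteq> 0"
  shows "in_circumdisk {a, b, c} z \<longleftrightarrow> sqdist z (circumcentre a b c) < sqdist a (circumcentre a b c)"
proof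
  assume "in_circumdisk {a, b, c} z"
  then obtain ctr r where "\<forall>x\<in>{a, b, c}. dist x ctr = r" "dist z ctr < r"
    unfolding in_circumdisk_def by blast
  moreover from this have "ctr = circumcentre a b c"
    using assms by (intro circumcentre_unique) (auto simp: dist_eq_iff_sqdist_eq[symmetric])
  ultimately show "sqdist z (circumcentre a b c) < sqdist a (circumcentre a b c)"
    by (auto simp: dist_less_iff_sqdist_less[symmetric])
next
  assume "sqdist z (circumcentre a b c) < sqdist a (circumcentre a b c)"
  then show "in_circumdisk {a, b, c} z" unfolding in_circumdisk_def
    using circumcentre_equidistant[OF assms]
    by (intro exI[of _ "circumcentre a b c"] exI[of _ "dist a (circumcentre a b c)"])
       (auto simp: dist_less_iff_sqdist_less dist_eq_iff_sqdist_eq)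
qed

lemma in_circumdisk_iff_pencil:
  assumes "orient p q e \<noteq> 0"
  shows "in_circumdisk {p, q, e} z \<longleftrightarrow> in_pencil_disk p q (pencil_param p q e) z"
  unfolding in_circumdisk_iff[OF assms] in_pencil_disk_def circumcentre_def ..

lemma inj_on_pencil_param:
  assumes "general_position S" "p \<in> S" "q \<in> S" "p \<noteq> q"
  shows "inj_on (pencil_param p q) (S - {p, q})"
proof (rule inj_onI, rule ccontr)
  fix e e' assume e: "e \<in> S - {p, q}" "e' \<in> S - {p, q}" "pencil_param p q e = pencil_param p q e'" "e \<noteq> e'"
  have "orient p q e \<noteq> 0" "orient p q e' \<noteq> 0"
    using e general_position_orient_neq_0[OF assms(1-3)] assms(4) by auto
  moreover have "circumcentre p q e = circumcentre p q e'"
    unfolding circumcentre_def e(3) ..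
  ultimately have "sqdist q (circumcentre p q e) = sqdist p (circumcentre p q e)"
    "sqdist e (circumcentre p q e) = sqdist p (circumcentre p q e)"
    "sqdist e' (circumcentre p q e) = sqdist p (circumcentre p q e)"
    using circumcentre_equidistant by metis+
  then show False
    using general_position_not_equidistant[of S p q e e'] assms e by auto
qed

section \<open>A generic sweep direction\<close>

definition along :: "real \<Rightarrow> point \<Rightarrow> real" where
  "along s z = z$1 + s * z$2"

definition across :: "real \<Rightarrow> point \<Rightarrow> real" where
  "across s z = z$2 - s * z$1"

text \<open>The member of the pencil through \<open>p\<close> and \<open>q\<close> whose centre has the same \<open>across\<close>
  coordinate as \<open>p\<close>: the circle through \<open>q\<close> tangent at \<open>p\<close> to the line of constant
  \<open>along\<close> through \<open>p\<close>.\<close>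
definition tangent_param :: "real \<Rightarrow> point \<Rightarrow> point \<Rightarrow> real" where
  "tangent_param s p q = (across s p - across s q) / (2 * (along s q - along s p))"

lemma across_pencil_centre:
  "across s (pencil_centre p q t) = (across s p + across s q) / 2 + t * (along s q - along s p)"
  unfolding across_def along_def pencil_centre_def by (simp add: field_simps)

lemma across_pencil_centre_tangent:
  assumes "along s q \<noteq> along s p"
  shows "across s (pencil_centre p q (tangent_param s p q)) = across s p"
  using assms unfolding across_pencil_centre tangent_param_def by (simp add: field_simps)

text \<open>The tangent circle at \<open>p\<close> through \<open>z\<close> has centre \<open>p + (tangent_scale s p z / 2) (1, s)\<close>.\<close>
definition tangent_scale :: "real \<Rightarrow> point \<Rightarrow> point \<Rightarrow> real" where
  "tangent_scale s p z = sqdist z p / (along s z - along s p)"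

lemma in_tangent_disk_iff:
  assumes "along s q \<noteq> along s p"
  shows "in_pencil_disk p q (tangent_param s p q) z \<longleftrightarrow>
    sqdist z p < tangent_scale s p q * (along s z - along s p)"
proof -
  have "inner (z - p) (z - q) - 2 * tangent_param s p q * orient p q z
      = sqdist z p - tangent_scale s p q * (along s z - along s p)"
    using assms unfolding inner_point tangent_param_def orient_def tangent_scale_def sqdist_def
      across_def along_def
    by (simp add: field_simps power2_eq_square)
  then show ?thesis unfolding in_pencil_disk_iff_inner by linarith
qed

text \<open>The sweep in direction \<open>(1, s)\<close> meets its events one at a time: no two points of \<open>S\<close>
  have the same \<open>along\<close> coordinate, and no circle through three points of \<open>S\<close> is tangent at
  one of them to a line of constant \<open>along\<close>.\<close>
definition generic_direction :: "real \<Rightarrow> point set \<Rightarrow> bool" where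
  "generic_direction s S \<longleftrightarrow> inj_on (along s) S \<and>
     (\<forall>a\<in>S. \<forall>b\<in>S. \<forall>c\<in>S. a \<noteq> b \<and> a \<noteq> c \<and> b \<noteq> c \<longrightarrow>
        across s (circumcentre a b c) \<noteq> across s a)"

lemma generic_direction_exists:
  assumes "finite S" "general_position S"
  obtains s where "generic_direction s S"
proof -
  define D2 where "D2 = {(a, b). a \<in> S \<and> b \<in> S \<and> a \<noteq> b}"
  define D3 where "D3 = {(a, b, c). a \<in> S \<and> b \<in> S \<and> c \<in> S \<and> a \<noteq> b \<and> a \<noteq> c \<and> b \<noteq> c}"
  define bad where "bad = (\<Union>(a, b)\<in>D2. {s. along s a = along s b})
    \<union> (\<Union>(a, b, c)\<in>D3. {s. across s (circumcentre a b c) = across s a})"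
  have "finite D2" "finite D3"
    using assms(1) by (auto simp: D2_def D3_def intro: finite_subset[of _ "S \<times> S"] finite_subset[of _ "S \<times> S \<times> S"])
  moreover have "finite {s. along s a = along s b}" if "(a, b) \<in> D2" for a b
  proof -
    have "a$1 - b$1 \<noteq> 0 \<or> a$2 - b$2 \<noteq> 0" using that point_eqI by (force simp: D2_def)
    moreover have "{s. along s a = along s b} = {s. (a$1 - b$1) + s * (a$2 - b$2) = 0}"
      by (auto simp: along_def algebra_simps)
    ultimately show ?thesis using finite_roots_affine by metis
  qed
  moreover have "finite {s. across s (circumcentre a b c) = across s a}" if "(a, b, c) \<in> D3" for a b c
  proof -
    define ctr where "ctr = circumcentre a b c"
    have "orient a b c \<noteq> 0" using that general_position_orient_neq_0[OF assms(2)] by (auto simp: D3_def)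
    then have "sqdist b ctr = sqdist a ctr" unfolding ctr_def by (rule circumcentre_equidistant)
    then have "ctr \<noteq> a" using that sqdist_pos[of b a] by (auto simp: D3_def sqdist_def)
    moreover have "{s. across s ctr = across s a} = {s. (ctr$2 - a$2) + s * (a$1 - ctr$1) = 0}"
      by (auto simp: across_def algebra_simps)
    ultimately show ?thesis using finite_roots_affine[of "ctr$2 - a$2" "a$1 - ctr$1"]
      unfolding ctr_def by (metis eq_iff_diff_eq_0 point_eqI)
  qed
  ultimately have "finite bad" unfolding bad_def by auto
  then obtain s where "s \<notin> bad" using ex_new_if_finite[OF infinite_UNIV_char_0] by blast
  then have "generic_direction s S"
    unfolding generic_direction_def bad_def D2_def D3_def inj_on_def by blast
  then show thesis by (rule that)
qed

lemma inj_on_tangent_scale: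
  assumes "general_position S" "generic_direction s S" "p \<in> S"
  shows "inj_on (tangent_scale s p) (S - {p})"
proof (rule inj_onI, rule ccontr)
  fix z z' assume z: "z \<in> S - {p}" "z' \<in> S - {p}" "tangent_scale s p z = tangent_scale s p z'" "z \<noteq> z'"
  define ctr :: point where "ctr = vector [p$1 + tangent_scale s p z / 2, p$2 + s * tangent_scale s p z / 2]"
  have on_circle: "sqdist x ctr = sqdist p ctr" if "x \<in> S - {p}" "tangent_scale s p x = tangent_scale s p z" for x
  proof -
    have "along s x \<noteq> along s p"
      using that assms(2,3) by (auto simp: generic_direction_def inj_on_def)
    then have "tangent_scale s p x * (along s x - along s p) = sqdist x p"
      by (simp add: tangent_scale_def)
    moreover have "sqdist x ctr - sqdist p ctr = sqdist x p - tangent_scale s p x * (along s x - along s p)"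
      unfolding ctr_def sqdist_def along_def that(2) by (simp add: power2_eq_square algebra_simps)
    ultimately show ?thesis by simp
  qed
  have "orient p z z' \<noteq> 0"
    using z general_position_orient_neq_0[OF assms(1,3)] by auto
  then have "ctr = circumcentre p z z'"
    using on_circle z by (intro circumcentre_unique) auto
  moreover have "across s ctr = across s p"
    unfolding ctr_def across_def by (simp add: algebra_simps)
  ultimately show False
    using assms(2,3) z unfolding generic_direction_def by auto
qed

section \<open>Counting ordered pairs by circles\<close>

definition left_points :: "point set \<Rightarrow> point \<Rightarrow> point \<Rightarrow> point set" where
  "left_points S p q = {x\<in>S. 0 < orient p q x}"

definition tangent_level :: "real \<Rightarrow> point set \<Rightarrow> point \<Rightarrow> point \<Rightarrow> nat" where
  "tangent_level s S p q = card {z\<in>S. in_pencil_disk p q (tangent_param s p q) z}"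

definition circum_depth :: "point set \<Rightarrow> point set \<Rightarrow> nat" where
  "circum_depth S T = card {z\<in>S. in_circumdisk T z}"

lemma in_tangent_disk_above:
  assumes "along s p < along s q"
  shows "in_pencil_disk p q (tangent_param s p q) z \<longleftrightarrow>
    along s p < along s z \<and> tangent_scale s p z < tangent_scale s p q"
proof (cases "along s p < along s z")
  case True
  then show ?thesis
    using assms in_tangent_disk_iff[of s q p z] by (simp add: tangent_scale_def pos_divide_less_eq)
next
  case False
  have "q \<noteq> p" using assms by auto
  then have "0 < tangent_scale s p q"
    using assms sqdist_pos[of q p] by (simp add: tangent_scale_def)
  then have "tangent_scale s p q * (along s z - along s p) \<le> 0"
    using False by (simp add: mult_nonneg_nonpos)
  then show ?thesis using assms False in_tangent_disk_iff[of s q p z] sqdist_nonneg[of z p] by auto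
qed

lemma in_tangent_disk_below:
  assumes "along s q < along s p"
  shows "in_pencil_disk p q (tangent_param s p q) z \<longleftrightarrow>
    along s z < along s p \<and> tangent_scale s p q < tangent_scale s p z"
proof (cases "along s z < along s p")
  case True
  then show ?thesis
    using assms in_tangent_disk_iff[of s q p z] by (simp add: tangent_scale_def neg_less_divide_eq)
next
  case False
  have "q \<noteq> p" using assms by auto
  then have "tangent_scale s p q < 0"
    using assms sqdist_pos[of q p] by (simp add: tangent_scale_def divide_pos_neg)
  then have "tangent_scale s p q * (along s z - along s p) \<le> 0"
    using False by (simp add: mult_nonpos_nonneg)
  then show ?thesis using assms False in_tangent_disk_iff[of s q p z] sqdist_nonneg[of z p] by auto
qed

lemma sum_tangent_level_indicator_at:
  assumes "finite S" "general_position S" "generic_direction s S" "p \<in> S"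
  shows "(\<Sum>q\<in>S - {p}. of_bool (tangent_level s S p q = k))
    = (of_bool (k < card {z\<in>S. along s p < along s z}) + of_bool (k < card {z\<in>S. along s z < along s p}) :: int)"
proof -
  define Ab where "Ab = {z\<in>S. along s p < along s z}"
  define Be where "Be = {z\<in>S. along s z < along s p}"
  have "along s z \<noteq> along s p" if "z \<in> S - {p}" for z
    using that assms(3,4) by (auto simp: generic_direction_def inj_on_def)
  then have split: "S - {p} = Ab \<union> Be" "Ab \<inter> Be = {}"
    using assms(4) by (auto simp: Ab_def Be_def neq_iff)
  have "finite Ab" "finite Be" using assms(1) by (simp_all add: Ab_def Be_def)
  have "inj_on (tangent_scale s p) (S - {p})"
    using assms(2-4) by (rule inj_on_tangent_scale)
  then have inj: "inj_on (tangent_scale s p) Ab" "inj_on (\<lambda>z. - tangent_scale s p z) Be"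
    using split by (auto simp: inj_on_def)
  have "tangent_level s S p q = card {z\<in>Ab. tangent_scale s p z < tangent_scale s p q}" if "q \<in> Ab" for q
    using that unfolding tangent_level_def Ab_def
    by (auto simp: in_tangent_disk_above intro!: arg_cong[where f = card])
  then have sum_above: "(\<Sum>q\<in>Ab. of_bool (tangent_level s S p q = k)) = (of_bool (k < card Ab) :: int)"
    using sum_indicator_rank_eq[OF \<open>finite Ab\<close> inj(1), of k] by simp
  have "tangent_level s S p q = card {z\<in>Be. - tangent_scale s p z < - tangent_scale s p q}"
    if "q \<in> Be" for q
    using that unfolding tangent_level_def Be_def
    by (auto simp: in_tangent_disk_below intro!: arg_cong[where f = card])
  then have sum_below: "(\<Sum>q\<in>Be. of_bool (tangent_level s S p q = k)) = (of_bool (k < card Be) :: int)"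
    using sum_indicator_rank_eq[OF \<open>finite Be\<close> inj(2), of k] by simp
  have "(\<Sum>q\<in>S - {p}. (of_bool (tangent_level s S p q = k) :: int))
      = (\<Sum>q\<in>Ab. of_bool (tangent_level s S p q = k)) + (\<Sum>q\<in>Be. of_bool (tangent_level s S p q = k))"
    unfolding split(1) by (rule sum.union_disjoint[OF \<open>finite Ab\<close> \<open>finite Be\<close> split(2)])
  then show ?thesis using sum_above sum_below by (simp add: Ab_def Be_def)
qed

lemma sum_tangent_level_indicator:
  assumes "finite S" "general_position S" "generic_direction s S"
  shows "(\<Sum>p\<in>S. \<Sum>q\<in>S - {p}. of_bool (tangent_level s S p q = k)) = 2 * int (card S - Suc k)"
proof -
  have inj: "inj_on (along s) S" "inj_on (\<lambda>z. - along s z) S"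
    using assms(3) by (auto simp: generic_direction_def inj_on_def)
  have "(\<Sum>p\<in>S. \<Sum>q\<in>S - {p}. of_bool (tangent_level s S p q = k))
      = (\<Sum>p\<in>S. of_bool (k < card {z\<in>S. - along s z < - along s p}))
        + (\<Sum>p\<in>S. (of_bool (k < card {z\<in>S. along s z < along s p}) :: int))"
    using sum_tangent_level_indicator_at[OF assms] by (simp add: sum.distrib)
  also have "\<dots> = 2 * int (card S - Suc k)"
    unfolding sum_indicator_rank_gt[OF assms(1) inj(1)] sum_indicator_rank_gt[OF assms(1) inj(2)] by simp
  finally show ?thesis .
qed

lemma pencil_disk_points:
  assumes "general_position S" "p \<in> S" "q \<in> S" "p \<noteq> q"
  shows "{z\<in>S. in_pencil_disk p q t z} = {e\<in>S - {p, q}.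
    if 0 < orient p q e then pencil_param p q e < t else t < pencil_param p q e}"
proof -
  have "in_pencil_disk p q t z \<longleftrightarrow> z \<notin> {p, q} \<and>
      (if 0 < orient p q z then pencil_param p q z < t else t < pencil_param p q z)"
    if "z \<in> S" for z
  proof (cases "z \<in> {p, q}")
    case False
    then have "orient p q z \<noteq> 0"
      using that general_position_orient_neq_0[OF assms(1-3)] assms(4) by auto
    then show ?thesis using False by (simp add: in_pencil_disk_iff_param)
  qed (auto simp: not_in_pencil_disk_ends)
  then show ?thesis by auto
qed

lemma circumdisk_points:
  assumes "general_position S" "p \<in> S" "q \<in> S" "p \<noteq> q" "e \<in> S - {p, q}"
  shows "{z\<in>S. in_circumdisk {p, q, e} z} = {e'\<in>S - {p, q} - {e}.
    if 0 < orient p q e' then pencil_param p q e' < pencil_param p q e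
    else pencil_param p q e < pencil_param p q e'}"
proof -
  have "orient p q e \<noteq> 0"
    using assms general_position_orient_neq_0[OF assms(1-3)] by auto
  then have "\<not> in_pencil_disk p q (pencil_param p q e) e"
    by (simp add: in_pencil_disk_iff_param)
  then show ?thesis
    using pencil_disk_points[OF assms(1-4), of "pencil_param p q e"]
    unfolding in_circumdisk_iff_pencil[OF \<open>orient p q e \<noteq> 0\<close>] by auto
qed

lemma tangent_param_crossing:
  assumes "orient p q e \<noteq> 0" "along s q \<noteq> along s p"
  shows "tangent_param s p q < pencil_param p q e \<longleftrightarrow>
      0 < (along s q - along s p) * (across s (circumcentre p q e) - across s p)"
    and "tangent_param s p q = pencil_param p q e \<longleftrightarrow> across s (circumcentre p q e) = across s p"
proof -
  have "across s (circumcentre p q e)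
      = (across s p + across s q) / 2 + pencil_param p q e * (along s q - along s p)"
    unfolding circumcentre_def by (rule across_pencil_centre)
  moreover have "across s p = (across s p + across s q) / 2 + tangent_param s p q * (along s q - along s p)"
    using across_pencil_centre_tangent[OF assms(2)] unfolding across_pencil_centre by simp
  ultimately have "across s (circumcentre p q e) - across s p
      = (pencil_param p q e - tangent_param s p q) * (along s q - along s p)"
    by (simp add: algebra_simps)
  then have "(along s q - along s p) * (across s (circumcentre p q e) - across s p)
      = (pencil_param p q e - tangent_param s p q) * (along s q - along s p)^2"
    by (simp add: power2_eq_square)
  then show "tangent_param s p q < pencil_param p q e \<longleftrightarrow>
      0 < (along s q - along s p) * (across s (circumcentre p q e) - across s p)"
    "tangent_param s p q = pencil_param p q e \<longleftrightarrow> across s (circumcentre p q e) = across s p"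
    using assms(2) by (auto simp: zero_less_mult_iff)
qed

text \<open>The contribution of \<open>e\<close> to the sweep of the pencil through \<open>p\<close> and \<open>q\<close> from the
  circle tangent at \<open>p\<close> to the half-plane left of \<open>pq\<close>: nonzero iff the sweep passes the
  circle through \<open>e\<close>, positive iff \<open>e\<close> enters the disk there.\<close>
definition crossing_sign :: "real \<Rightarrow> point \<Rightarrow> point \<Rightarrow> point \<Rightarrow> int" where
  "crossing_sign s p q e = (if 0 < orient p q e then 1 else -1) *
     of_bool (0 < (along s q - along s p) * (across s (circumcentre p q e) - across s p))"

lemma tangent_level_indicator:
  assumes "finite S" "general_position S" "generic_direction s S" "p \<in> S" "q \<in> S" "p \<noteq> q"
  shows "of_bool (int (tangent_level s S p q) = k) = of_bool (int (card (left_points S p q)) = k)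
    - (\<Sum>e\<in>S - {p, q}. crossing_sign s p q e * indicator_jump k (circum_depth S {p, q, e}))"
proof -
  define E where "E = S - {p, q}"
  define t where "t = tangent_param s p q"
  have along: "along s q \<noteq> along s p"
    using assms(3-6) by (auto simp: generic_direction_def inj_on_def)
  have crossing: "t < pencil_param p q e \<longleftrightarrow>
      0 < (along s q - along s p) * (across s (circumcentre p q e) - across s p)"
    and "t \<noteq> pencil_param p q e" if "e \<in> E" for e
  proof -
    have "orient p q e \<noteq> 0"
      using that general_position_orient_neq_0[OF assms(2,4,5)] assms(6) by (auto simp: E_def)
    moreover have "across s (circumcentre p q e) \<noteq> across s p"
      using that assms(3-6) by (auto simp: generic_direction_def E_def)
    ultimately show "t < pencil_param p q e \<longleftrightarrow>
        0 < (along s q - along s p) * (across s (circumcentre p q e) - across s p)"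
      "t \<noteq> pencil_param p q e"
      using tangent_param_crossing[OF _ along] by (simp_all add: t_def)
  qed
  then have "t \<notin> pencil_param p q ` E" by auto
  moreover have "finite E" "inj_on (pencil_param p q) E"
    using assms(1) inj_on_pencil_param[OF assms(2,4-6)] by (simp_all add: E_def)
  ultimately have "finite E" "inj_on (pencil_param p q) E" "t \<notin> pencil_param p q ` E" by auto
  note sweep = sweep_count_indicator[OF this, of "\<lambda>e. 0 < orient p q e" k]
  have "{e\<in>E. 0 < orient p q e} = left_points S p q"
    by (auto simp: E_def left_points_def)
  moreover have "(\<Sum>e | e \<in> E \<and> t < pencil_param p q e. (if 0 < orient p q e then 1 else -1) *
          indicator_jump k (card {e'\<in>E - {e}. if 0 < orient p q e'
            then pencil_param p q e' < pencil_param p q e else pencil_param p q e < pencil_param p q e'}))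
    = (\<Sum>e\<in>E. crossing_sign s p q e * indicator_jump k (circum_depth S {p, q, e}))"
    unfolding sum.inter_filter[OF \<open>finite E\<close>] crossing_sign_def circum_depth_def
    using crossing circumdisk_points[OF assms(2,4-6)] by (intro sum.cong) (auto simp: E_def)
  ultimately show ?thesis
    using sweep pencil_disk_points[OF assms(2,4-6), of t]
    unfolding tangent_level_def t_def E_def by simp
qed

lemma orient_mul_across_circumcentre:
  assumes "orient p q e \<noteq> 0"
  shows "orient p q e * (across s (circumcentre p q e) - across s p)
    = (sqdist e p * (along s q - along s p) - sqdist q p * (along s e - along s p)) / 2"
proof -
  have centre: "across s (circumcentre p q e)
      = (across s p + across s q) / 2 + pencil_param p q e * (along s q - along s p)"
    unfolding circumcentre_def by (rule across_pencil_centre)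
  have "orient p q e * (across s (circumcentre p q e) - across s p)
      = orient p q e * (across s q - across s p) / 2
        + (orient p q e * pencil_param p q e) * (along s q - along s p)"
    unfolding centre by (simp add: algebra_simps)
  also have "\<dots> = (orient p q e * (across s q - across s p)
      + inner (e - p) (e - q) * (along s q - along s p)) / 2"
    using assms by (simp add: pencil_param_def field_simps)
  also have "orient p q e * (across s q - across s p) + inner (e - p) (e - q) * (along s q - along s p)
      = sqdist e p * (along s q - along s p) - sqdist q p * (along s e - along s p)"
    unfolding orient_def inner_point sqdist_def across_def along_def
    by (simp add: power2_eq_square algebra_simps)
  finally show ?thesis .
qed

lemma crossing_sign_swap:
  assumes "orient p q e \<noteq> 0" "along s q \<noteq> along s p" "along s e \<noteq> along s p"
    "across s (circumcentre p q e) \<noteq> across s p"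
  shows "crossing_sign s p q e + crossing_sign s p e q
    = of_bool ((along s q - along s p) * (along s e - along s p) < 0)"
proof -
  define A where "A = along s q - along s p"
  define B where "B = along s e - along s p"
  define D where "D = across s (circumcentre p q e) - across s p"
  define d where "d = orient p q e"
  have "q \<noteq> p" "e \<noteq> p" using assms(2,3) by auto
  then have sq: "0 < sqdist q p" "0 < sqdist e p" by (simp_all add: sqdist_pos)
  have id: "d * D = (sqdist e p * A - sqdist q p * B) / 2"
    unfolding d_def D_def A_def B_def by (rule orient_mul_across_circumcentre[OF assms(1)])
  have "0 < d * D" if "0 < A" "B < 0"
    unfolding id using mult_pos_pos[OF sq(2) that(1)] mult_pos_neg[OF sq(1) that(2)] by simp
  moreover have "d * D < 0" if "A < 0" "0 < B"
    unfolding id using mult_pos_neg[OF sq(2) that(1)] mult_pos_pos[OF sq(1) that(2)] by simp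
  moreover have "A \<noteq> 0" "B \<noteq> 0" "D \<noteq> 0" "d \<noteq> 0"
    using assms by (simp_all add: A_def B_def D_def d_def)
  moreover have "crossing_sign s p e q = (if 0 < d then -1 else 1) * of_bool (0 < B * D)"
    using assms(1) unfolding crossing_sign_def circumcentre_swap23[OF assms(1)] orient_swap23[of p e q]
    by (simp add: B_def D_def d_def)
  ultimately show ?thesis
    unfolding crossing_sign_def A_def[symmetric] B_def[symmetric] D_def[symmetric] d_def[symmetric]
    by (auto simp: zero_less_mult_iff mult_less_0_iff)
qed

lemma crossing_sign_sum:
  assumes "general_position S" "generic_direction s S" "a \<in> S" "b \<in> S" "c \<in> S"
    "a \<noteq> b" "a \<noteq> c" "b \<noteq> c"
  shows "crossing_sign s a b c + crossing_sign s a c b + crossing_sign s b a c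
    + crossing_sign s b c a + crossing_sign s c a b + crossing_sign s c b a = 1"
proof -
  have orient: "orient a b c \<noteq> 0" "orient b a c \<noteq> 0" "orient c a b \<noteq> 0"
    using assms general_position_orient_neq_0[OF assms(1)] by auto
  have centre: "circumcentre b a c = circumcentre a b c" "circumcentre c a b = circumcentre a b c"
    using circumcentre_swap12[OF orient(1)] circumcentre_swap12[OF orient(3)]
      circumcentre_swap23[OF orient(1)] by simp_all
  have along: "along s a \<noteq> along s b" "along s a \<noteq> along s c" "along s b \<noteq> along s c"
    using assms(2-8) by (auto simp: generic_direction_def inj_on_def)
  have generic: "across s (circumcentre x y z) \<noteq> across s x"
    if "x \<in> S" "y \<in> S" "z \<in> S" "x \<noteq> y" "x \<noteq> z" "y \<noteq> z" for x y z
    using assms(2) that unfolding generic_direction_def by blast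
  have across: "across s (circumcentre a b c) \<noteq> across s a" "across s (circumcentre a b c) \<noteq> across s b"
    "across s (circumcentre a b c) \<noteq> across s c"
    using generic[of a b c] generic[of b a c] generic[of c a b] assms(3-8) centre by auto
  have "crossing_sign s a b c + crossing_sign s a c b
      = of_bool ((along s b - along s a) * (along s c - along s a) < 0)"
    using orient along across by (intro crossing_sign_swap) auto
  moreover have "crossing_sign s b a c + crossing_sign s b c a
      = of_bool ((along s a - along s b) * (along s c - along s b) < 0)"
    using orient along across centre by (intro crossing_sign_swap) auto
  moreover have "crossing_sign s c a b + crossing_sign s c b a
      = of_bool ((along s a - along s c) * (along s b - along s c) < 0)"
    using orient along across centre by (intro crossing_sign_swap) auto
  ultimately show ?thesis
    using one_strictly_between[OF along] by simp
qed

lemma sum_indicator_jump_circum_depth: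
  assumes "finite S"
  shows "(\<Sum>T | T \<subseteq> S \<and> card T = 3. indicator_jump k (circum_depth S T))
    = int (circ_count S (k - 1)) - int (circ_count S k)"
proof -
  have count: "(\<Sum>T | T \<subseteq> S \<and> card T = 3. (of_bool (int (circum_depth S T) = j) :: int))
      = int (circ_count S j)" for j
  proof (cases "j < 0")
    case False
    have "{T. T \<subseteq> S \<and> card T = 3} \<inter> {T. int (circum_depth S T) = j}
        = {T. T \<subseteq> S \<and> card T = 3 \<and> int (card {p\<in>S. in_circumdisk T p}) = j}"
      by (auto simp: circum_depth_def)
    then show ?thesis using False assms by (simp add: circ_count_def)
  qed (simp add: circ_count_def)
  have "int c + 1 = k \<longleftrightarrow> int c = k - 1" for c by linarith
  then show ?thesis unfolding indicator_jump_def sum_subtractf count[symmetric] by simp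
qed

definition left_pair_count :: "point set \<Rightarrow> nat \<Rightarrow> nat" where
  "left_pair_count S k = card {(p, q). p \<in> S \<and> q \<in> S \<and> p \<noteq> q \<and> card (left_points S p q) = k}"

lemma sum_pairs_left_count:
  assumes "finite S"
  shows "(\<Sum>p\<in>S. \<Sum>q\<in>S - {p}. of_bool (card (left_points S p q) = k)) = int (left_pair_count S k)"
proof -
  have "(\<Sum>p\<in>S. \<Sum>q\<in>S - {p}. (of_bool (card (left_points S p q) = k) :: int))
      = (\<Sum>p\<in>S. int (card ((S - {p}) \<inter> {q. card (left_points S p q) = k})))"
    using assms by simp
  also have "\<dots> = int (card (Sigma S (\<lambda>p. (S - {p}) \<inter> {q. card (left_points S p q) = k})))"
    using assms by simp
  also have "Sigma S (\<lambda>p. (S - {p}) \<inter> {q. card (left_points S p q) = k})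
      = {(p, q). p \<in> S \<and> q \<in> S \<and> p \<noteq> q \<and> card (left_points S p q) = k}"
    by auto
  finally show ?thesis by (simp add: left_pair_count_def)
qed

theorem left_pair_count_circ_count:
  assumes "finite S" "general_position S"
  shows "int (left_pair_count S k) - (int (circ_count S (int k - 1)) - int (circ_count S (int k)))
    = 2 * int (card S - Suc k)"
proof -
  obtain s where s: "generic_direction s S" using generic_direction_exists[OF assms] .
  have "2 * int (card S - Suc k) = (\<Sum>p\<in>S. \<Sum>q\<in>S - {p}. of_bool (int (tangent_level s S p q) = int k))"
    using sum_tangent_level_indicator[OF assms s] by simp
  also have "\<dots> = (\<Sum>p\<in>S. \<Sum>q\<in>S - {p}. of_bool (int (card (left_points S p q)) = int k))
      - (\<Sum>p\<in>S. \<Sum>q\<in>S - {p}. \<Sum>e\<in>S - {p, q}.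
          crossing_sign s p q e * indicator_jump (int k) (circum_depth S {p, q, e}))"
    unfolding sum_subtractf[symmetric] by (intro sum.cong refl tangent_level_indicator[OF assms s]) auto
  also have "\<dots> = int (left_pair_count S k) - (int (circ_count S (int k - 1)) - int (circ_count S (int k)))"
    using sum_pairs_left_count[OF assms(1)] sum_indicator_jump_circum_depth[OF assms(1)]
      sum_ordered_triples[OF assms(1), where w = "crossing_sign s"
        and g = "\<lambda>T. indicator_jump (int k) (circum_depth S T)"]
      crossing_sign_sum[OF assms(2) s] by simp
  finally show ?thesis by simp
qed

section \<open>Unbounded Voronoi regions\<close>

lemma voronoi_region_iff: "c \<in> voronoi_region S A \<longleftrightarrow> (\<forall>a\<in>A. \<forall>b\<in>S - A. sqdist a c \<le> sqdist b c)"
  unfolding voronoi_region_def halfplane_def by (auto simp: dist_le_iff_sqdist_le)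

definition strictly_separable :: "point set \<Rightarrow> point set \<Rightarrow> bool" where
  "strictly_separable S A \<longleftrightarrow> (\<exists>u. \<forall>a\<in>A. \<forall>b\<in>S - A. 0 < inner u (a - b))"

lemma eventually_ray_in_voronoi_region:
  assumes "finite S" "A \<subseteq> S" "\<forall>a\<in>A. \<forall>b\<in>S - A. 0 < inner u (a - b)"
  shows "eventually (\<lambda>t. t *\<^sub>R u \<in> voronoi_region S A) at_top"
proof -
  have "eventually (\<lambda>t. sqdist a (t *\<^sub>R u) \<le> sqdist b (t *\<^sub>R u)) at_top" if "a \<in> A" "b \<in> S - A" for a b
  proof -
    have pos: "0 < inner u (a - b)" using assms(3) that by blast
    have "sqdist a (t *\<^sub>R u) \<le> sqdist b (t *\<^sub>R u)"
      if "(inner a a - inner b b) / (2 * inner u (a - b)) \<le> t" for t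
    proof -
      have "inner a a - inner b b \<le> t * (2 * inner u (a - b))"
        using that pos by (simp add: pos_divide_le_eq)
      moreover have "inner (t *\<^sub>R u) (a - b) = t * inner u (a - b)" by simp
      ultimately show ?thesis using sqdist_diff[of a "t *\<^sub>R u" b] by linarith
    qed
    then show ?thesis by (rule eventually_mono[OF eventually_ge_at_top])
  qed
  moreover have "finite A" "finite (S - A)" using assms(1,2) finite_subset by auto
  ultimately show ?thesis
    unfolding voronoi_region_iff by (intro eventually_ball_finite ballI) auto
qed

lemma unbounded_voronoi_region_if_separable:
  assumes "finite S" "A \<subseteq> S" "A \<noteq> {}" "A \<noteq> S" "strictly_separable S A"
  shows "voronoi_region S A \<noteq> {} \<and> \<not> bounded (voronoi_region S A)"
proof -
  obtain u where u: "\<forall>a\<in>A. \<forall>b\<in>S - A. 0 < inner u (a - b)"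
    using assms(5) by (auto simp: strictly_separable_def)
  have "u \<noteq> 0" using u assms(2-4) by fastforce
  note ray = eventually_ray_in_voronoi_region[OF assms(1,2) u]
  then obtain t where "t *\<^sub>R u \<in> voronoi_region S A"
    unfolding eventually_at_top_linorder by blast
  moreover have "\<not> bounded (voronoi_region S A)"
  proof
    assume "bounded (voronoi_region S A)"
    then obtain B where B: "\<forall>x\<in>voronoi_region S A. norm x \<le> B" by (auto simp: bounded_iff)
    have "B < norm (t *\<^sub>R u)" if "max 0 (B / norm u) < t" for t
    proof -
      have "B / norm u < t" "0 < t" using that by auto
      then show ?thesis using \<open>u \<noteq> 0\<close> by (simp add: divide_less_eq)
    qed
    then have "eventually (\<lambda>t. B < norm (t *\<^sub>R u)) at_top"
      by (rule eventually_mono[OF eventually_gt_at_top])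
    with ray have "eventually (\<lambda>t. t *\<^sub>R u \<in> voronoi_region S A \<and> B < norm (t *\<^sub>R u)) at_top"
      by (rule eventually_conj)
    then obtain t where "t *\<^sub>R u \<in> voronoi_region S A" "B < norm (t *\<^sub>R u)"
      unfolding eventually_at_top_linorder by blast
    then show False using B by fastforce
  qed
  ultimately show ?thesis by auto
qed

lemma weakly_separable_if_unbounded_voronoi:
  assumes "finite S" "A \<subseteq> S" "\<not> bounded (voronoi_region S A)"
  shows "\<exists>u. u \<noteq> 0 \<and> (\<forall>a\<in>A. \<forall>b\<in>S - A. 0 \<le> inner u (a - b))"
proof (rule ccontr)
  assume "\<not> ?thesis"
  then have no_dir: "\<exists>(a, b)\<in>A \<times> (S - A). 0 < inner u (b - a)" if "u \<noteq> 0" for u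
    using that by (force simp: inner_diff_right)
  define P where "P = (\<lambda>(a, b). (b - a, (inner b b - inner a a) / 2)) ` (A \<times> (S - A))"
  have "finite (A \<times> (S - A))" using assms(1,2) finite_subset by blast
  then have "finite P" by (simp add: P_def)
  moreover have "\<exists>(v, k)\<in>P. 0 < inner u v" if "u \<noteq> 0" for u
    using no_dir[OF that] by (force simp: P_def)
  ultimately have "bounded {x. \<forall>(v, k)\<in>P. inner x v \<le> k}"
    by (rule bounded_halfspace_intersection)
  moreover have "voronoi_region S A \<subseteq> {x. \<forall>(v, k)\<in>P. inner x v \<le> k}"
  proof
    fix x assume x: "x \<in> voronoi_region S A"
    have "inner x (b - a) \<le> (inner b b - inner a a) / 2" if "a \<in> A" "b \<in> S - A" for a b
    proof -
      have "sqdist a x \<le> sqdist b x" using x that by (simp add: voronoi_region_iff)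
      then show ?thesis using sqdist_diff[of a x b] by (simp add: inner_diff_right)
    qed
    then show "x \<in> {x. \<forall>(v, k)\<in>P. inner x v \<le> k}" by (auto simp: P_def)
  qed
  ultimately show False using assms(3) bounded_subset by blast
qed

lemma general_position_same_level:
  assumes "general_position S" "u \<noteq> 0" "x \<in> S" "y \<in> S" "z \<in> S"
    "inner u x = inner u y" "inner u x = inner u z"
  shows "x = y \<or> x = z \<or> y = z"
  using general_position_orient_neq_0[OF assms(1,3-5)] orient_eq_0_if_inner_eq[OF assms(2,6,7)]
  by blast

text \<open>In general position at most one pair \<open>(a0, b0)\<close> lies on the weakly separating line;
  tilting \<open>u\<close> slightly towards \<open>a0 - b0\<close> makes the separation strict.\<close>
lemma strictly_separable_if_weakly:
  assumes "finite S" "general_position S" "A \<subseteq> S" "u \<noteq> 0"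
    "\<forall>a\<in>A. \<forall>b\<in>S - A. 0 \<le> inner u (a - b)"
  shows "strictly_separable S A"
proof -
  obtain v where v: "\<And>a b. a \<in> A \<Longrightarrow> b \<in> S - A \<Longrightarrow> inner u (a - b) = 0 \<Longrightarrow> 0 < inner v (a - b)"
  proof (cases "\<exists>a0\<in>A. \<exists>b0\<in>S - A. inner u (a0 - b0) = 0")
    case True
    then obtain a0 b0 where ab0: "a0 \<in> A" "b0 \<in> S - A" "inner u (a0 - b0) = 0" by blast
    have "a = a0 \<and> b = b0" if ab: "a \<in> A" "b \<in> S - A" "inner u (a - b) = 0" for a b
    proof -
      have "inner u b0 \<le> inner u a" "inner u b \<le> inner u a0"
        using assms(5) ab ab0 by (auto simp: inner_diff_right)
      then have "inner u a = inner u a0" "inner u a = inner u b0" "inner u a = inner u b"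
        using ab(3) ab0(3) by (auto simp: inner_diff_right)
      then show ?thesis
        using general_position_same_level[OF assms(2,4)] ab ab0 assms(3) by blast
    qed
    moreover have "0 < inner (a0 - b0) (a0 - b0)" using ab0 by auto
    ultimately show ?thesis by (intro that[of "a0 - b0"]) auto
  next
    case False
    then show ?thesis by (intro that[of 0]) auto
  qed
  have fin: "finite (A \<times> (S - A))" using assms(1,3) finite_subset by blast
  have perturbable: "0 < inner u (fst x - snd x) \<or>
      (inner u (fst x - snd x) = 0 \<and> 0 < inner v (fst x - snd x))" if "x \<in> A \<times> (S - A)" for x
    using that assms(5) v by (force simp: order_le_less)
  obtain \<epsilon> where "\<forall>x\<in>A \<times> (S - A).
      0 < inner u (fst x - snd x) + \<epsilon> * inner v (fst x - snd x)"
    using exists_perturbation_pos[where f = "\<lambda>x. inner u (fst x - snd x)"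
        and g = "\<lambda>x. inner v (fst x - snd x)", OF fin perturbable] by blast
  then show ?thesis
    unfolding strictly_separable_def by (intro exI[of _ "u + \<epsilon> *\<^sub>R v"]) (auto simp: inner_add_left)
qed

definition rot90 :: "point \<Rightarrow> point" where
  "rot90 u = vector [- u$2, u$1]"

lemma inner_rot90_orient: "inner (rot90 (q - p)) (x - p) = orient p q x"
  unfolding rot90_def inner_point orient_def by (simp add: algebra_simps)

lemma slope_le_iff_orient:
  assumes "0 < inner u c" "0 < inner u d"
  shows "inner (rot90 u) c / inner u c \<le> inner (rot90 u) d / inner u d \<longleftrightarrow> orient 0 d c \<le> 0"
proof -
  have "u \<noteq> 0" using assms(1) by auto
  then have pos: "0 < u$1^2 + u$2^2" by (auto simp: point_neq_0_iff add_pos_nonneg add_nonneg_pos)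
  have "inner (rot90 u) c / inner u c \<le> inner (rot90 u) d / inner u d
      \<longleftrightarrow> inner (rot90 u) c * inner u d \<le> inner (rot90 u) d * inner u c"
    using assms by (simp add: field_simps)
  also have "\<dots> \<longleftrightarrow> (u$1^2 + u$2^2) * orient 0 d c \<le> 0"
  proof -
    have "inner (rot90 u) d * inner u c - inner (rot90 u) c * inner u d
        = - ((u$1^2 + u$2^2) * orient 0 d c)"
      unfolding rot90_def inner_point orient_def by (simp add: power2_eq_square algebra_simps)
    then show ?thesis by linarith
  qed
  also have "\<dots> \<longleftrightarrow> orient 0 d c \<le> 0"
    using pos mult_le_0_iff[of "u$1^2 + u$2^2" "orient 0 d c"] by auto
  finally show ?thesis .
qed

text \<open>Rotate a separating line until it is blocked: \<open>(p, q)\<close> maximises the slope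
  \<open>\<langle>rot90 u, a - b\<rangle> / \<langle>u, a - b\<rangle>\<close> over \<open>A \<times> (S - A)\<close>.\<close>
lemma left_points_if_strictly_separable:
  assumes "finite S" "general_position S" "A \<subseteq> S" "A \<noteq> {}" "A \<noteq> S" "strictly_separable S A"
  obtains p q where "p \<in> A" "q \<in> S - A" "left_points S p q = A - {p}"
proof -
  obtain u where u: "\<forall>a\<in>A. \<forall>b\<in>S - A. 0 < inner u (a - b)"
    using assms(6) by (auto simp: strictly_separable_def)
  define slope where "slope x = inner (rot90 u) (fst x - snd x) / inner u (fst x - snd x)" for x
  define PP where "PP = A \<times> (S - A)"
  have "finite PP" using assms(1,3) finite_subset by (auto simp: PP_def)
  have "S - A \<noteq> {}" using assms(3,5) by blast
  then have "PP \<noteq> {}" using assms(4) by (simp add: PP_def)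
  then have "Max (slope ` PP) \<in> slope ` PP" using \<open>finite PP\<close> by simp
  then obtain p q where "(p, q) \<in> PP" "slope (p, q) = Max (slope ` PP)" by auto
  then have pq: "p \<in> A" "q \<in> S - A" "\<forall>x\<in>PP. slope x \<le> slope (p, q)"
    using \<open>finite PP\<close> by (auto simp: PP_def)
  have "0 < orient p q x" if "x \<in> A" "x \<noteq> p" for x
  proof -
    have "slope (x, q) \<le> slope (p, q)" using pq that by (simp add: PP_def)
    then have "orient 0 (p - q) (x - q) \<le> 0"
      using u pq that by (simp add: slope_def slope_le_iff_orient)
    moreover have "orient 0 (p - q) (x - q) = - orient p q x" by (simp add: orient_def algebra_simps)
    moreover have "orient p q x \<noteq> 0"
      using general_position_orient_neq_0[OF assms(2), of p q x] that pq assms(3) by auto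
    ultimately show ?thesis by linarith
  qed
  moreover have "orient p q y < 0" if "y \<in> S - A" "y \<noteq> q" for y
  proof -
    have "slope (p, y) \<le> slope (p, q)" using pq that by (simp add: PP_def)
    then have "orient 0 (p - q) (p - y) \<le> 0"
      using u pq that by (simp add: slope_def slope_le_iff_orient)
    moreover have "orient 0 (p - q) (p - y) = orient p q y" by (simp add: orient_def algebra_simps)
    moreover have "orient p q y \<noteq> 0"
      using general_position_orient_neq_0[OF assms(2), of p q y] that pq assms(3) by auto
    ultimately show ?thesis by linarith
  qed
  ultimately have "left_points S p q = A - {p}"
    using pq assms(3) unfolding left_points_def by (force simp: not_less_iff_gr_or_eq)
  then show thesis using pq(1,2) by (intro that)
qed

lemma insert_left_points_sides:
  assumes "general_position S" "p \<in> S" "q \<in> S" "p \<noteq> q"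
  defines "A \<equiv> insert p (left_points S p q)"
  shows "A \<subseteq> S" "q \<notin> A" "\<And>x. x \<in> A - {p} \<Longrightarrow> 0 < orient p q x"
    "\<And>x. x \<in> S - A - {q} \<Longrightarrow> orient p q x < 0"
proof -
  show "A \<subseteq> S" "q \<notin> A" "\<And>x. x \<in> A - {p} \<Longrightarrow> 0 < orient p q x"
    using assms(2,4) by (auto simp: A_def left_points_def)
  show "orient p q x < 0" if "x \<in> S - A - {q}" for x
    using that general_position_orient_neq_0[OF assms(1-3), of x] assms(4)
    by (auto simp: A_def left_points_def)
qed

lemma strictly_separable_insert_left_points:
  assumes "finite S" "general_position S" "p \<in> S" "q \<in> S" "p \<noteq> q"
  shows "strictly_separable S (insert p (left_points S p q))"
proof -
  define A where "A = insert p (left_points S p q)"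
  note sides = insert_left_points_sides[OF assms(2-5), folded A_def]
  define n where "n = rot90 (q - p)"
  have n: "inner n (a - b) = orient p q a - orient p q b" for a b
    using inner_rot90_orient[of q p a] inner_rot90_orient[of q p b]
    by (simp add: n_def inner_diff_right)
  have fin: "finite (A \<times> (S - A))" using assms(1) sides(1) finite_subset by blast
  have perturbable: "0 < inner n (fst x - snd x) \<or>
      (inner n (fst x - snd x) = 0 \<and> 0 < inner (p - q) (fst x - snd x))" if "x \<in> A \<times> (S - A)" for x
  proof (cases "x = (p, q)")
    case True
    then show ?thesis using assms(5) by (simp add: n)
  next
    case False
    then have "0 < orient p q (fst x) - orient p q (snd x)"
      using that sides(3,4)[of "fst x"] sides(3,4)[of "snd x"] by (cases x) fastforce
    then show ?thesis by (simp add: n)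
  qed
  obtain \<epsilon> where "\<forall>x\<in>A \<times> (S - A). 0 < inner n (fst x - snd x) + \<epsilon> * inner (p - q) (fst x - snd x)"
    using exists_perturbation_pos[where f = "\<lambda>x. inner n (fst x - snd x)"
        and g = "\<lambda>x. inner (p - q) (fst x - snd x)", OF fin perturbable] by blast
  then show ?thesis
    unfolding strictly_separable_def A_def[symmetric]
    by (intro exI[of _ "n + \<epsilon> *\<^sub>R (p - q)"]) (auto simp: inner_add_left)
qed

lemma insert_left_points_inj:
  assumes "general_position S" "p \<in> S" "q \<in> S" "p \<noteq> q" "p' \<in> S" "q' \<in> S" "p' \<noteq> q'"
    and "insert p (left_points S p q) = insert p' (left_points S p' q')"
  shows "p = p' \<and> q = q'"
proof -
  define A where "A = insert p (left_points S p q)"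
  note sides = insert_left_points_sides[OF assms(1-4), folded A_def]
  note sides' = insert_left_points_sides[OF assms(1,5-7), folded assms(8), folded A_def]
  have "p' \<in> A" "p \<in> A" using assms(8) by (auto simp: A_def)
  show ?thesis
  proof (cases "p = p'")
    case True
    show ?thesis
    proof (rule ccontr)
      assume "\<not> ?thesis"
      then have "orient p q q' < 0" "orient p q' q < 0"
        using True sides(2,4) sides'(2,4) assms(3,6) by auto
      then show False using orient_swap23[of p q' q] by simp
    qed
  next
    case False
    have "0 < orient p q p'" "0 < orient p' q' p"
      using False sides(3) sides'(3) \<open>p' \<in> A\<close> \<open>p \<in> A\<close> by auto
    moreover have "orient p q p' - orient p q q' = orient p' q' q - orient p' q' p"
      by (simp add: orient_def algebra_simps)
    moreover have "orient p q q' < 0" "orient p' q' q < 0" if "q \<noteq> q'"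
      using that sides(2,4) sides'(2,4) assms(3,6) by auto
    moreover have "orient p q p' = - orient p' q p"
      by (simp add: orient_def algebra_simps)
    ultimately show ?thesis by (cases "q = q'") auto
  qed
qed

lemma unbounded_voronoi_region_iff:
  assumes "finite S" "general_position S" "A \<subseteq> S" "A \<noteq> {}" "A \<noteq> S"
  shows "voronoi_region S A \<noteq> {} \<and> \<not> bounded (voronoi_region S A) \<longleftrightarrow>
    (\<exists>p q. p \<in> S \<and> q \<in> S \<and> p \<noteq> q \<and> A = insert p (left_points S p q))"
proof
  assume "voronoi_region S A \<noteq> {} \<and> \<not> bounded (voronoi_region S A)"
  then obtain u where "u \<noteq> 0" "\<forall>a\<in>A. \<forall>b\<in>S - A. 0 \<le> inner u (a - b)"
    using weakly_separable_if_unbounded_voronoi[OF assms(1,3)] by blast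
  then have "strictly_separable S A"
    by (rule strictly_separable_if_weakly[OF assms(1-3)])
  then obtain p q where "p \<in> A" "q \<in> S - A" "left_points S p q = A - {p}"
    using left_points_if_strictly_separable[OF assms] by blast
  then show "\<exists>p q. p \<in> S \<and> q \<in> S \<and> p \<noteq> q \<and> A = insert p (left_points S p q)"
    using assms(3) by (intro exI[of _ p] exI[of _ q]) auto
next
  assume "\<exists>p q. p \<in> S \<and> q \<in> S \<and> p \<noteq> q \<and> A = insert p (left_points S p q)"
  then have "strictly_separable S A"
    using strictly_separable_insert_left_points[OF assms(1,2)] by blast
  then show "voronoi_region S A \<noteq> {} \<and> \<not> bounded (voronoi_region S A)"
    by (rule unbounded_voronoi_region_if_separable[OF assms(1,3-5)])
qed

theorem f_inf_eq_left_pair_count: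
  assumes "finite S" "general_position S" "1 \<le> i" "i < card S"
  shows "f_inf S i = left_pair_count S (i - 1)"
proof -
  define D where "D = {(p, q). p \<in> S \<and> q \<in> S \<and> p \<noteq> q \<and> card (left_points S p q) = i - 1}"
  define R where "R = {A. A \<subseteq> S \<and> card A = i \<and> voronoi_region S A \<noteq> {} \<and> \<not> bounded (voronoi_region S A)}"
  define region where "region = (\<lambda>(p, q). insert p (left_points S p q))"
  have card_insert: "card (insert p (left_points S p q)) = Suc (card (left_points S p q))" for p q
    using assms(1) by (simp add: left_points_def)
  have "inj_on region D"
    using insert_left_points_inj[OF assms(2)] by (auto simp: inj_on_def D_def region_def)
  moreover have "region ` D = R"
  proof (intro equalityI subsetI)
    fix A assume "A \<in> region ` D"
    then obtain p q where "p \<in> S" "q \<in> S" "p \<noteq> q" "card (left_points S p q) = i - 1"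
      and A: "A = insert p (left_points S p q)" by (auto simp: D_def region_def)
    moreover have "A \<subseteq> S" "A \<noteq> S"
      using insert_left_points_sides[OF assms(2) \<open>p \<in> S\<close> \<open>q \<in> S\<close> \<open>p \<noteq> q\<close>] A \<open>q \<in> S\<close> by auto
    ultimately show "A \<in> R"
      using unbounded_voronoi_region_iff[OF assms(1,2)] card_insert assms(3) by (auto simp: R_def)
  next
    fix A assume "A \<in> R"
    then have "A \<subseteq> S" "card A = i" "voronoi_region S A \<noteq> {} \<and> \<not> bounded (voronoi_region S A)"
      by (auto simp: R_def)
    moreover have "A \<noteq> {}" "A \<noteq> S" using \<open>card A = i\<close> assms(3,4) by auto
    ultimately obtain p q where "p \<in> S" "q \<in> S" "p \<noteq> q" "A = insert p (left_points S p q)"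
      using unbounded_voronoi_region_iff[OF assms(1,2)] by blast
    then show "A \<in> region ` D"
      using \<open>card A = i\<close> card_insert by (force simp: D_def region_def)
  qed
  ultimately have "card D = card R" by (metis bij_betw_same_card inj_on_imp_bij_betw)
  then show ?thesis by (simp add: f_inf_def left_pair_count_def D_def R_def)
qed

theorem mainTheorem7:
  fixes S :: "point set" and i :: nat
  assumes "finite S" and "card S \<ge> 3" and "general_position S"
    and "1 \<le> i" and "i \<le> card S - 2"
  shows "int (f_inf S i) + (int (circ_count S (int i - 1)) - int (circ_count S (int i - 2)))
           = 2 * (int (card S) - int i)"
proof -
  have "i < card S" using assms(2,5) by linarith
  have "f_inf S i = left_pair_count S (i - 1)"
    using f_inf_eq_left_pair_count[OF assms(1,3,4) \<open>i < card S\<close>] .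
  moreover have "int (left_pair_count S (i - 1))
      - (int (circ_count S (int (i - 1) - 1)) - int (circ_count S (int (i - 1))))
      = 2 * int (card S - Suc (i - 1))"
    by (rule left_pair_count_circ_count[OF assms(1,3)])
  moreover have "int (i - 1) = int i - 1" "int (card S - Suc (i - 1)) = int (card S) - int i"
    using assms(4) \<open>i < card S\<close> by auto
  ultimately show ?thesis by (simp add: algebra_simps)
qed

end
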